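(* Let $n\ge 3$, $q=\frac{2n}{n-2}$, $\kappa=\frac{n-1}{n}$. Identify $S^1$ with $[-\pi,\pi]$ with endpoints identified, and let $\lambda=-1$ on $(-\pi,0)$, $\lambda=1$ on $(0,\pi)$. Let $N$ be a smooth positive function on $S^1$, $\gamma_N=-\frac{\int_{S^1}\lambda N}{\int_{S^1}N}$, and $t,\eta,\mu\in\mathbb{R}$ with $|t|\neq1$. For $d>0$ let $\psi_d$ and $\hat\psi_d$ be the unique positive solutions in $W^{2,\infty}(S^1)$ of, respectively, $$-2\kappa q\,d^{-2q/n}\psi_d''-2\eta^2d^{-2q}\psi_d^{-q-1}-\kappa(\mu d^{-q}+\gamma_N+\lambda)^2\psi_d^{-q-1}+\kappa(t+\lambda)^2\psi_d^{q-1}=0,$$ $$-2\kappa q\,d^{-2q/n}\hat\psi_d''-\kappa(\gamma_N+\lambda)^2\hat\psi_d^{-q-1}+\kappa(t+\lambda)^2\hat\psi_d^{q-1}=0.$$ Then there exists a constant $c>0$ such that $\|\hat\psi_d-\psi_d\|_{L^\infty(S^1)}<c\,d^{-q}$ for all sufficiently large $d$. In particular $\lim_{d\to\infty}\psi_d(0)=\lim_{d\to\infty}\hat\psi_d(0)$. *)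

theory Defs
  imports "HOL-Analysis.Analysis"
begin

text \<open>Functions on the circle S^1 = [-pi,pi] with endpoints identified are
represented as 2pi-periodic functions on the real line.\<close>

definition periodic2pi :: "(real \<Rightarrow> real) \<Rightarrow> bool" where
  "periodic2pi f \<longleftrightarrow> (\<forall>x. f (x + 2 * pi) = f x)"

text \<open>The step function lambda: -1 on (-pi,0), 1 on (0,pi) (values at 0, pi
are immaterial), extended periodically.  The representative of x in [-pi,pi) is
x - 2 pi floor((x+pi)/(2pi)).\<close>

definition lam :: "real \<Rightarrow> real" where
  "lam x = (let y = x - 2 * pi * of_int \<lfloor>(x + pi) / (2 * pi)\<rfloor>
            in if y < 0 then -1 else 1)"

definition smooth_fun :: "(real \<Rightarrow> real) \<Rightarrow> bool" where
  "smooth_fun f \<longleftrightarrow> (\<forall>k x. (deriv ^^ k) f differentiable (at x))"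

definition gammaN :: "(real \<Rightarrow> real) \<Rightarrow> real" where
  "gammaN N = - (integral {-pi..pi} (\<lambda>x. lam x * N x) / integral {-pi..pi} N)"

text \<open>f is a W^{2,infinity}(S^1) function satisfying the second-order equation
E(x, f x, f'' x) = 0 almost everywhere: f is periodic, C^1, f' is Lipschitz
(i.e. f' is in W^{1,infinity}), and its a.e. derivative f'' (the weak second
derivative) satisfies the equation a.e.\<close>

definition W2inf_solution :: "(real \<Rightarrow> real \<Rightarrow> real \<Rightarrow> bool) \<Rightarrow> (real \<Rightarrow> real) \<Rightarrow> bool" where
  "W2inf_solution E f \<longleftrightarrow> periodic2pi f \<and>
     (\<exists>f' f''. (\<forall>x. (f has_real_derivative f' x) (at x)) \<and>
              (\<exists>L. \<forall>x y. \<bar>f' x - f' y\<bar> \<le> L * \<bar>x - y\<bar>) \<and>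
              (AE x in lborel. (f' has_real_derivative f'' x) (at x)) \<and>
              (AE x in lborel. E x (f x) (f'' x)))"

end

theory Submission
  imports Defs
begin

text \<open>Both \<psi> d and \<psi>h d solve equations a u'' = B u^(q-1) - A u^(-q-1) with the same a and B,
  and their A-coefficients differ uniformly by O(d^-q).  Since |gammaN N| < 1 and |t| \<noteq> 1, for
  large d all coefficients are bounded away from 0 and infinity.  A maximum principle for periodic
  W^{2,\<infinity>} functions then yields first a uniform positive lower bound for all such solutions
  and then, because the right-hand side is strictly increasing in u above that bound, a bound on
  the difference of two solutions by a constant multiple of the difference of their A-coefficients.\<close>

section \<open>A maximum principle for periodic W^{2,\<infinity>} functions\<close>

definition periodic_W2inf :: "(real \<Rightarrow> real) \<Rightarrow> (real \<Rightarrow> real) \<Rightarrow> (real \<Rightarrow> real) \<Rightarrow> bool" where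
  "periodic_W2inf f f' f'' \<longleftrightarrow> periodic2pi f \<and> (\<forall>x. (f has_real_derivative f' x) (at x)) \<and>
     (\<exists>L. L-lipschitz_on UNIV f') \<and> (AE x in lborel. (f' has_real_derivative f'' x) (at x))"

lemma W2inf_solution_imp_periodic_W2inf:
  assumes "W2inf_solution E f"
  shows "\<exists>f' f''. periodic_W2inf f f' f'' \<and> (AE x in lborel. E x (f x) (f'' x))"
proof -
  obtain f' f'' L where f: "periodic2pi f" "\<forall>x. (f has_real_derivative f' x) (at x)"
    "\<forall>x y. \<bar>f' x - f' y\<bar> \<le> L * \<bar>x - y\<bar>" "AE x in lborel. (f' has_real_derivative f'' x) (at x)"
    "AE x in lborel. E x (f x) (f'' x)"
    using assms unfolding W2inf_solution_def by blast
  have "0 \<le> L" using f(3)[rule_format, of 1 0] abs_ge_zero order.trans by simp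
  with f(3) have "L-lipschitz_on UNIV f'" by (intro lipschitz_onI) (simp_all add: dist_real_def)
  with f have "periodic_W2inf f f' f''" unfolding periodic_W2inf_def by blast
  with f(5) show ?thesis by blast
qed

lemma W2inf_solution_mono:
  assumes "W2inf_solution E f" "\<And>x u u''. E x u u'' \<Longrightarrow> E' x u u''"
  shows "W2inf_solution E' f"
proof -
  obtain f' f'' where f: "periodic2pi f \<and> (\<forall>x. (f has_real_derivative f' x) (at x)) \<and>
      (\<exists>L. \<forall>x y. \<bar>f' x - f' y\<bar> \<le> L * \<bar>x - y\<bar>) \<and> (AE x in lborel. (f' has_real_derivative f'' x) (at x))"
    and "AE x in lborel. E x (f x) (f'' x)"
    using assms(1) unfolding W2inf_solution_def by blast
  moreover from this(2) have "AE x in lborel. E' x (f x) (f'' x)"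
    by (rule eventually_mono) (rule assms(2))
  ultimately show ?thesis unfolding W2inf_solution_def by blast
qed

lemma periodic_W2inf_const: "periodic_W2inf (\<lambda>_. c) (\<lambda>_. 0) (\<lambda>_. 0)"
  unfolding periodic_W2inf_def periodic2pi_def by (auto intro: lipschitz_on_constant)

lemma periodic_W2inf_diff:
  assumes "periodic_W2inf u u' u''" "periodic_W2inf v v' v''"
  shows "periodic_W2inf (\<lambda>x. u x - v x) (\<lambda>x. u' x - v' x) (\<lambda>x. u'' x - v'' x)"
proof -
  obtain Lu Lv where "Lu-lipschitz_on UNIV u'" "Lv-lipschitz_on UNIV v'"
    using assms unfolding periodic_W2inf_def by blast
  then have "(Lu + Lv)-lipschitz_on UNIV (\<lambda>x. u' x - v' x)" by (rule lipschitz_on_diff)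
  moreover have "AE x in lborel. ((\<lambda>x. u' x - v' x) has_real_derivative u'' x - v'' x) (at x)"
  proof -
    have "AE x in lborel. (u' has_real_derivative u'' x) (at x)"
      "AE x in lborel. (v' has_real_derivative v'' x) (at x)"
      using assms unfolding periodic_W2inf_def by blast+
    then show ?thesis by eventually_elim (rule DERIV_diff)
  qed
  ultimately show ?thesis
    using assms unfolding periodic_W2inf_def periodic2pi_def by (auto intro!: derivative_intros)
qed

lemma periodic2pi_attains_max:
  assumes "periodic2pi f" "continuous_on UNIV f"
  shows "\<exists>x0. \<forall>x. f x \<le> f x0"
proof -
  have shift_nat: "f (y + 2 * pi * real m) = f y" for y m
  proof (induction m)
    case (Suc m)
    have "f (y + 2 * pi * real (Suc m)) = f ((y + 2 * pi * real m) + 2 * pi)"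
      by (simp add: algebra_simps)
    with Suc show ?case using assms(1) by (simp add: periodic2pi_def)
  qed simp
  have shift_int: "f (y + 2 * pi * of_int k) = f y" for y k
  proof (cases "k \<ge> 0")
    case True
    then show ?thesis using shift_nat[of y "nat k"] by simp
  next
    case False
    then show ?thesis using shift_nat[of "y + 2 * pi * of_int k" "nat (- k)"] by simp
  qed
  obtain x0 where "\<forall>y \<in> {0..2*pi}. f y \<le> f x0"
    using continuous_attains_sup[OF compact_Icc _ continuous_on_subset[OF assms(2)], of 0 "2*pi"]
      pi_gt_zero by auto
  then have x0: "\<And>y. y \<in> {0..2*pi} \<Longrightarrow> f y \<le> f x0" by blast
  have "f x \<le> f x0" for x
  proof -
    define k where "k = \<lfloor>x / (2 * pi)\<rfloor>"
    have "x / (2 * pi) - 1 < k" "k \<le> x / (2 * pi)"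
      unfolding k_def by linarith+
    then have "x - 2 * pi * of_int k \<in> {0..2*pi}"
      by (auto simp: field_simps)
    then show ?thesis
      using x0 shift_int[of "x - 2 * pi * of_int k" k] by simp
  qed
  then show ?thesis by blast
qed

lemma last_crossing_without_positive_derivative:
  fixes h :: "real \<Rightarrow> real"
  assumes cont: "continuous_on {a..b} h" and "a \<le> b" "h b < y" "y < h a"
  shows "\<exists>x \<in> {a<..<b}. h x = y \<and> (\<forall>D. (h has_real_derivative D) (at x) \<longrightarrow> D \<le> 0)"
proof -
  define S where "S = {a..b} \<inter> h -` {y}"
  have "closed S" unfolding S_def using cont by (intro continuous_closed_preimage) auto
  moreover have "S \<noteq> {}" using IVT2'[OF _ _ \<open>a \<le> b\<close> cont, of y] assms by (auto simp: S_def)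
  moreover have bdd: "bdd_above S" by (auto simp: S_def bdd_above_def)
  ultimately have "Sup S \<in> S" by (simp add: closed_contains_Sup)
  then have "a \<le> Sup S" "Sup S \<le> b" and hx: "h (Sup S) = y" by (auto simp: S_def)
  moreover have "Sup S \<noteq> a" "Sup S \<noteq> b" using hx assms(3,4) by auto
  ultimately have x: "Sup S \<in> {a<..<b}" "h (Sup S) = y" by auto
  have "D \<le> 0" if D: "(h has_real_derivative D) (at (Sup S))" for D
  proof (rule ccontr)
    assume "\<not> D \<le> 0"
    then obtain \<delta> where \<delta>: "\<delta> > 0" "\<And>t. 0 < t \<Longrightarrow> t < \<delta> \<Longrightarrow> y < h (Sup S + t)"
      using DERIV_pos_inc_right[OF D] hx by auto
    define t where "t = min (\<delta> / 2) ((b - Sup S) / 2)"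
    have "t \<le> (b - Sup S) / 2" unfolding t_def by (rule min.cobounded2)
    then have t: "0 < t" "t < \<delta>" "Sup S + t \<le> b" using \<delta>(1) x(1) by (auto simp: t_def)
    have "continuous_on {Sup S + t..b} h"
      using continuous_on_subset[OF cont] \<open>a \<le> Sup S\<close> t(1) by auto
    then obtain z where "Sup S + t \<le> z" "z \<le> b" "h z = y"
      using IVT2'[of h b y "Sup S + t"] \<delta>(2)[OF t(1,2)] t(3) assms(3) by auto
    then have "z \<in> S" using x(1) t(1) by (auto simp: S_def)
    then show False using cSup_upper[OF _ bdd, of z] \<open>Sup S + t \<le> z\<close> t(1) by linarith
  qed
  with x show ?thesis by blast
qed

text \<open>After tilting g to h x = g x + \<epsilon> x with h b < h a, every value in (h b, h a) is taken at
  a point where h has no positive derivative, hence at a point of the null set where the hypothesis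
  fails; but Lipschitz maps send null sets to null sets.\<close>

lemma lipschitz_mono_if_AE_deriv_nonneg:
  fixes g g' :: "real \<Rightarrow> real"
  assumes lip: "L-lipschitz_on {a..b} g" and "a \<le> b"
    and deriv: "AE x in lborel. x \<in> {a<..<b} \<longrightarrow> (g has_real_derivative g' x) (at x) \<and> 0 \<le> g' x"
  shows "g a \<le> g b"
proof (rule ccontr)
  assume "\<not> g a \<le> g b"
  then have "a < b" using \<open>a \<le> b\<close> by (metis order.order_iff_strict)
  define \<epsilon> where "\<epsilon> = (g a - g b) / (2 * (b - a))"
  have "\<epsilon> > 0" using \<open>\<not> g a \<le> g b\<close> \<open>a < b\<close> by (simp add: \<epsilon>_def)
  define h where "h x = g x + \<epsilon> * x" for x
  have "\<epsilon> * (b - a) = (g a - g b) / 2" using \<open>a < b\<close> by (simp add: \<epsilon>_def field_simps)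
  then have "h b < h a" using \<open>\<not> g a \<le> g b\<close> by (simp add: h_def algebra_simps)
  have h_lip: "(L + \<epsilon>)-lipschitz_on {a..b} h"
  proof -
    have "\<epsilon>-lipschitz_on {a..b} (\<lambda>x. \<epsilon> * x)"
      using \<open>\<epsilon> > 0\<close> by (intro lipschitz_onI) (auto simp: dist_real_def abs_mult simp flip: right_diff_distrib)
    with lip show ?thesis unfolding h_def by (rule lipschitz_on_add)
  qed
  define Z where "Z = {x \<in> {a<..<b}. \<not> ((g has_real_derivative g' x) (at x) \<and> 0 \<le> g' x)}"
  obtain N where "negligible N"
    and N: "{x. \<not> (x \<in> {a<..<b} \<longrightarrow> (g has_real_derivative g' x) (at x) \<and> 0 \<le> g' x)} \<subseteq> N"
    using AE_completion[OF deriv] unfolding eventually_ae_filter_negligible by blast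
  have "negligible Z"
    using \<open>negligible N\<close> by (rule negligible_subset) (use N in \<open>auto simp: Z_def\<close>)
  moreover have "Z \<subseteq> {a..b}" by (auto simp: Z_def)
  ultimately have "negligible (h ` Z)"
    by (intro negligible_locally_Lipschitz_image exI[of _ UNIV] exI[of _ "L + \<epsilon>"] conjI ballI
        lipschitz_on_normD[OF h_lip]) auto
  moreover have "{h b<..<h a} \<subseteq> h ` Z"
  proof
    fix y assume "y \<in> {h b<..<h a}"
    then have "h b < y" "y < h a" by auto
    then obtain x where x: "x \<in> {a<..<b}" "h x = y"
      and no_pos: "\<And>D. (h has_real_derivative D) (at x) \<Longrightarrow> D \<le> 0"
      using last_crossing_without_positive_derivative[OF lipschitz_on_continuous_on[OF h_lip] \<open>a \<le> b\<close>]
      by blast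
    have "x \<in> Z"
    proof (rule ccontr)
      assume "x \<notin> Z"
      then have "(g has_real_derivative g' x) (at x)" "0 \<le> g' x"
        using x(1) unfolding Z_def by auto
      then have "(h has_real_derivative g' x + \<epsilon>) (at x)"
        unfolding h_def by (auto intro!: derivative_eq_intros)
      then show False using no_pos \<open>0 \<le> g' x\<close> \<open>\<epsilon> > 0\<close> by fastforce
    qed
    with x show "y \<in> h ` Z" by blast
  qed
  ultimately have "negligible {h b<..<h a}" by (rule negligible_subset)
  then show False using \<open>h b < h a\<close> negligible_interval(2)[of "h b" "h a"] by (simp add: box_real)
qed

lemma DERIV_const_on_interval:
  fixes f :: "real \<Rightarrow> real"
  assumes "(f has_real_derivative D) (at x)" "x \<in> {a<..<b}" "\<And>z. z \<in> {a<..<b} \<Longrightarrow> f z = c"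
  shows "D = 0"
proof (rule DERIV_local_const[OF assms(1)])
  show "0 < min (x - a) (b - x)" using assms(2) by simp
  show "\<forall>z. \<bar>x - z\<bar> < min (x - a) (b - x) \<longrightarrow> f x = f z"
  proof (intro allI impI)
    fix z assume "\<bar>x - z\<bar> < min (x - a) (b - x)"
    then have "z \<in> {a<..<b}" by (simp add: abs_less_iff)
    then show "f x = f z" using assms(2,3) by simp
  qed
qed

lemma flat_right_of_max_if_AE_convex:
  fixes w w' w'' :: "real \<Rightarrow> real"
  assumes d1: "\<And>x. (w has_real_derivative w' x) (at x)" and lip: "L-lipschitz_on UNIV w'"
    and d2: "AE x in lborel. (w' has_real_derivative w'' x) (at x)"
    and max: "\<And>x. w x \<le> w x0"
    and convex: "AE x in lborel. x \<in> {x0<..<x0 + \<delta>} \<longrightarrow> 0 \<le> w'' x"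
    and "x0 \<le> y" "y < x0 + \<delta>"
  shows "w y = w x0"
proof -
  have "w' x0 = 0"
    using DERIV_local_max[OF d1 zero_less_one] max by blast
  have w'_nonneg: "0 \<le> w' z" if "x0 \<le> z" "z < x0 + \<delta>" for z
  proof -
    have "w' x0 \<le> w' z"
    proof (rule lipschitz_mono_if_AE_deriv_nonneg[OF lipschitz_on_subset[OF lip] \<open>x0 \<le> z\<close>])
      show "AE s in lborel. s \<in> {x0<..<z} \<longrightarrow> (w' has_real_derivative w'' s) (at s) \<and> 0 \<le> w'' s"
        using d2 convex
      proof eventually_elim
        case (elim s)
        show ?case
        proof
          assume "s \<in> {x0<..<z}"
          then have "s \<in> {x0<..<x0 + \<delta>}" using that by auto
          with elim show "(w' has_real_derivative w'' s) (at s) \<and> 0 \<le> w'' s" by blast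
        qed
      qed
    qed simp
    with \<open>w' x0 = 0\<close> show ?thesis by simp
  qed
  have "w x0 \<le> w y"
  proof (rule DERIV_nonneg_imp_nondecreasing[OF \<open>x0 \<le> y\<close>])
    fix z assume "x0 \<le> z" "z \<le> y"
    then show "\<exists>D. (w has_real_derivative D) (at z) \<and> 0 \<le> D"
      using d1 w'_nonneg[of z] \<open>y < x0 + \<delta>\<close> by (intro exI[of _ "w' z"]) auto
  qed
  with max[of y] show ?thesis by simp
qed

text \<open>At a positive global maximum x0, convexity makes w' nondecreasing to the right of x0, so w is
  constant there; then w'' vanishes on an interval where it should be positive.\<close>

lemma periodic_W2inf_max_principle:
  assumes w: "periodic_W2inf w w' w''" and convex: "AE x in lborel. 0 < w x \<longrightarrow> 0 < w'' x"
  shows "w x \<le> 0"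
proof (rule ccontr)
  assume "\<not> w x \<le> 0"
  obtain L where per: "periodic2pi w" and d1: "\<And>x. (w has_real_derivative w' x) (at x)"
    and lip: "L-lipschitz_on UNIV w'" and d2: "AE x in lborel. (w' has_real_derivative w'' x) (at x)"
    using w unfolding periodic_W2inf_def by blast
  have "continuous_on UNIV w"
    using d1 by (intro continuous_at_imp_continuous_on) (auto intro: DERIV_isCont)
  then obtain x0 where max: "\<And>x. w x \<le> w x0"
    using periodic2pi_attains_max[OF per] by blast
  with \<open>\<not> w x \<le> 0\<close> have "0 < w x0" using max[of x] by linarith
  then have "\<forall>\<^sub>F y in at x0. 0 < w y"
    using order_tendstoD(1) DERIV_isCont[OF d1, of x0] unfolding isCont_def by blast
  then obtain \<delta> where "\<delta> > 0" and "\<And>y. y \<noteq> x0 \<Longrightarrow> dist y x0 < \<delta> \<Longrightarrow> 0 < w y"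
    unfolding eventually_at by blast
  with \<open>0 < w x0\<close> have pos: "0 < w y" if "y \<in> {x0<..<x0 + \<delta>}" for y
    using that by (cases "y = x0") (auto simp: dist_real_def)
  have convex': "AE y in lborel. y \<in> {x0<..<x0 + \<delta>} \<longrightarrow> 0 \<le> w'' y"
    using convex
  proof eventually_elim
    case (elim y)
    show ?case
    proof
      assume "y \<in> {x0<..<x0 + \<delta>}"
      with elim pos[of y] show "0 \<le> w'' y" by simp
    qed
  qed
  have const: "w y = w x0" if "y \<in> {x0<..<x0 + \<delta>}" for y
    using flat_right_of_max_if_AE_convex[OF d1 lip d2 max convex', of y] that by simp
  have w'_zero: "w' y = 0" if "y \<in> {x0<..<x0 + \<delta>}" for y
    using DERIV_const_on_interval[OF d1 that const] .
  have "AE y in lborel. y \<notin> {x0<..<x0 + \<delta>}"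
    using d2 convex
  proof eventually_elim
    case (elim y)
    show ?case
    proof
      assume y: "y \<in> {x0<..<x0 + \<delta>}"
      have "w'' y = 0"
        using DERIV_const_on_interval[of w' "w'' y" y x0 "x0 + \<delta>" 0] elim y w'_zero by blast
      with elim pos[OF y] show False by simp
    qed
  qed
  then have "emeasure lborel {x0<..<x0 + \<delta>} = 0"
    by (subst (asm) AE_iff_measurable[of "{x0<..<x0 + \<delta>}"]) auto
  with \<open>\<delta> > 0\<close> show False by simp
qed

section \<open>Equations of Lichnerowicz type\<close>

text \<open>Both equations of the theorem have the form a u'' = lichnerowicz_rhs q B A u with
  a = 2 \<kappa> q d^(-2q/n) and B = \<kappa> (t + lam x)^2.\<close>

definition lichnerowicz_rhs :: "real \<Rightarrow> real \<Rightarrow> real \<Rightarrow> real \<Rightarrow> real" where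
  "lichnerowicz_rhs q B A u = B * u powr (q - 1) - A * u powr (- q - 1)"

lemma lichnerowicz_rhs_neg:
  fixes q B A Alo Bhi u :: real
  assumes "0 < u" "u < (Alo / Bhi) powr (1 / (2 * q))" "0 < q"
    and "0 \<le> B" "B \<le> Bhi" "0 < Bhi" "Alo \<le> A" "0 < Alo"
  shows "lichnerowicz_rhs q B A u < 0"
proof -
  have "u powr (2 * q) < ((Alo / Bhi) powr (1 / (2 * q))) powr (2 * q)"
    using assms by (intro powr_less_mono2) auto
  also have "\<dots> = Alo / Bhi" using assms by (simp add: powr_powr)
  finally have "Bhi * u powr (2 * q) < Alo"
    using \<open>0 < Bhi\<close> by (simp add: field_simps)
  moreover have "B * u powr (2 * q) \<le> Bhi * u powr (2 * q)"
    using \<open>B \<le> Bhi\<close> by (rule mult_right_mono) simp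
  ultimately have "B * u powr (2 * q) < A" using \<open>Alo \<le> A\<close> by linarith
  moreover have "u powr (q - 1) = u powr (- q - 1) * u powr (2 * q)"
    by (simp flip: powr_add)
  ultimately show ?thesis
    using \<open>0 < u\<close> mult_strict_left_mono[of "B * u powr (2 * q)" A "u powr (- q - 1)"]
    by (simp add: lichnerowicz_rhs_def algebra_simps)
qed

lemma powr_diff_ge_mvt:
  fixes Lb U V p :: real
  assumes "0 < Lb" "Lb \<le> V" "V < U" "1 \<le> p"
  shows "p * Lb powr (p - 1) * (U - V) \<le> U powr p - V powr p"
proof -
  obtain z where z: "V < z" "z < U" "U powr p - V powr p = (U - V) * (p * z powr (p - 1))"
    using MVT2[OF \<open>V < U\<close>, of "\<lambda>z. z powr p" "\<lambda>z. p * z powr (p - 1)"] assms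
      has_real_derivative_powr by force
  have "Lb powr (p - 1) \<le> z powr (p - 1)" using assms z by (intro powr_mono2) auto
  then show ?thesis using assms z by (simp add: mult_left_mono mult_right_mono)
qed

text \<open>Above Lb the term B u^(q-1) grows with slope at least Blo (q - 1) Lb^(q-2), while
  A2 u^(-q-1) decreases and A1, A2 differ by at most E.\<close>

lemma lichnerowicz_rhs_gap:
  fixes Lb V U q Blo B A1 A2 E :: real
  assumes "0 < Lb" "Lb \<le> V" "2 \<le> q" "0 < Blo" "Blo \<le> B" "0 \<le> A2" "\<bar>A1 - A2\<bar> \<le> E"
    and gap: "E / (Blo * (q - 1) * Lb powr (2 * q - 1)) < U - V"
  shows "lichnerowicz_rhs q B A2 V < lichnerowicz_rhs q B A1 U"
proof -
  define m where "m = Blo * (q - 1) * Lb powr (q - 2)"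
  have "m > 0" using assms by (simp add: m_def)
  have "E \<ge> 0" using assms by linarith
  then have "0 \<le> E / (Blo * (q - 1) * Lb powr (2 * q - 1))" using assms by simp
  with gap have "V < U" by linarith
  have "Lb powr (2 * q - 1) = Lb powr (q - 2) * Lb powr (q + 1)" by (simp flip: powr_add)
  have "E * Lb powr (- q - 1) = E / Lb powr (q + 1)"
    using powr_minus_divide[of Lb "q + 1"] by simp
  also have "\<dots> = m * (E / (Blo * (q - 1) * Lb powr (2 * q - 1)))"
    using \<open>Lb powr (2 * q - 1) = _\<close> \<open>m > 0\<close> assms by (simp add: m_def)
  also have "\<dots> < m * (U - V)"
    using gap \<open>m > 0\<close> by (rule mult_strict_left_mono)
  also have "\<dots> = Blo * ((q - 1) * Lb powr (q - 2) * (U - V))" by (simp add: m_def)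
  also have "\<dots> \<le> B * ((q - 1) * Lb powr (q - 2) * (U - V))"
    using assms \<open>V < U\<close> by (intro mult_right_mono) auto
  also have "\<dots> \<le> B * (U powr (q - 1) - V powr (q - 1))"
    using powr_diff_ge_mvt[of Lb V U "q - 1"] assms \<open>V < U\<close> by (intro mult_left_mono) auto
  finally have main: "E * Lb powr (- q - 1) < B * (U powr (q - 1) - V powr (q - 1))" .
  have "U powr (- q - 1) \<le> V powr (- q - 1)" "U powr (- q - 1) \<le> Lb powr (- q - 1)"
    using assms \<open>V < U\<close> by (auto intro!: powr_mono2')
  then have "0 \<le> A2 * (V powr (- q - 1) - U powr (- q - 1))"
    and "E * U powr (- q - 1) \<le> E * Lb powr (- q - 1)"
    using assms \<open>E \<ge> 0\<close> by (auto intro: mult_left_mono)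
  moreover have "- E * U powr (- q - 1) \<le> (A2 - A1) * U powr (- q - 1)"
    using assms by (intro mult_right_mono) auto
  ultimately show ?thesis
    using main by (simp add: lichnerowicz_rhs_def algebra_simps)
qed

lemma periodic_W2inf_lichnerowicz_lower_bound:
  assumes u: "periodic_W2inf u u' u''" "\<forall>x. 0 < u x"
    and eq: "AE x in lborel. a * u'' x = lichnerowicz_rhs q (B x) (A x) (u x)"
    and "0 < a" "0 < q" "\<forall>x. 0 \<le> B x \<and> B x \<le> Bhi" "0 < Bhi" "\<forall>x. Alo \<le> A x" "0 < Alo"
  shows "(Alo / Bhi) powr (1 / (2 * q)) \<le> u x"
proof -
  let ?Lb = "(Alo / Bhi) powr (1 / (2 * q))"
  have "?Lb - u x \<le> 0"
  proof (rule periodic_W2inf_max_principle[of "\<lambda>x. ?Lb - u x" "\<lambda>x. 0 - u' x" "\<lambda>x. 0 - u'' x"])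
    show "periodic_W2inf (\<lambda>x. ?Lb - u x) (\<lambda>x. 0 - u' x) (\<lambda>x. 0 - u'' x)"
      by (rule periodic_W2inf_diff[OF periodic_W2inf_const u(1)])
    show "AE x in lborel. 0 < ?Lb - u x \<longrightarrow> 0 < 0 - u'' x"
      using eq
    proof eventually_elim
      case (elim x)
      show ?case
      proof
        assume "0 < ?Lb - u x"
        then have "lichnerowicz_rhs q (B x) (A x) (u x) < 0"
          using assms by (intro lichnerowicz_rhs_neg[where Alo = Alo and Bhi = Bhi]) auto
        with elim have "a * u'' x < 0" by simp
        with \<open>0 < a\<close> show "0 < 0 - u'' x" by (simp add: mult_less_0_iff)
      qed
    qed
  qed
  then show ?thesis by simp
qed

lemma periodic_W2inf_lichnerowicz_comparison:
  assumes u: "periodic_W2inf u u' u''" and v: "periodic_W2inf v v' v''"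
    and eq_u: "AE x in lborel. a * u'' x = lichnerowicz_rhs q (B x) (A1 x) (u x)"
    and eq_v: "AE x in lborel. a * v'' x = lichnerowicz_rhs q (B x) (A2 x) (v x)"
    and "\<forall>x. Lb \<le> v x" "0 < Lb" "0 < a" "2 \<le> q" "\<forall>x. Blo \<le> B x" "0 < Blo"
    and "\<forall>x. 0 \<le> A2 x" "\<forall>x. \<bar>A1 x - A2 x\<bar> \<le> E"
  shows "u x - v x \<le> E / (Blo * (q - 1) * Lb powr (2 * q - 1))"
proof -
  let ?K = "E / (Blo * (q - 1) * Lb powr (2 * q - 1))"
  have "u x - v x - ?K \<le> 0"
  proof (rule periodic_W2inf_max_principle[of "\<lambda>x. u x - v x - ?K" "\<lambda>x. u' x - v' x - 0"
        "\<lambda>x. u'' x - v'' x - 0"])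
    show "periodic_W2inf (\<lambda>x. u x - v x - ?K) (\<lambda>x. u' x - v' x - 0) (\<lambda>x. u'' x - v'' x - 0)"
      by (intro periodic_W2inf_diff u v periodic_W2inf_const)
    show "AE x in lborel. 0 < u x - v x - ?K \<longrightarrow> 0 < u'' x - v'' x - 0"
      using eq_u eq_v
    proof eventually_elim
      case (elim x)
      show ?case
      proof
        assume "0 < u x - v x - ?K"
        then have "lichnerowicz_rhs q (B x) (A2 x) (v x) < lichnerowicz_rhs q (B x) (A1 x) (u x)"
          using assms by (intro lichnerowicz_rhs_gap[where Lb = Lb and Blo = Blo and E = E]) auto
        with elim have "a * v'' x < a * u'' x" by simp
        with \<open>0 < a\<close> show "0 < u'' x - v'' x - 0" by simp
      qed
    qed
  qed
  then show ?thesis by simp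
qed

lemma W2inf_lichnerowicz_solutions_close:
  assumes sol_u: "W2inf_solution (\<lambda>x u u''. a * u'' = lichnerowicz_rhs q (B x) (A1 x) u) u"
    and sol_v: "W2inf_solution (\<lambda>x v v''. a * v'' = lichnerowicz_rhs q (B x) (A2 x) v) v"
    and "\<forall>x. 0 < u x" "\<forall>x. 0 < v x" "0 < a" "2 \<le> q"
    and "\<forall>x. Blo \<le> B x \<and> B x \<le> Bhi" "0 < Blo" "\<forall>x. Alo \<le> A1 x \<and> Alo \<le> A2 x" "0 < Alo"
    and "\<forall>x. \<bar>A1 x - A2 x\<bar> \<le> E"
  shows "\<bar>u x - v x\<bar> \<le> E / (Blo * (q - 1) * ((Alo / Bhi) powr (1 / (2 * q))) powr (2 * q - 1))"
proof -
  obtain u' u'' where u: "periodic_W2inf u u' u''"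
    and eq_u: "AE x in lborel. a * u'' x = lichnerowicz_rhs q (B x) (A1 x) (u x)"
    using W2inf_solution_imp_periodic_W2inf[OF sol_u] by blast
  obtain v' v'' where v: "periodic_W2inf v v' v''"
    and eq_v: "AE x in lborel. a * v'' x = lichnerowicz_rhs q (B x) (A2 x) (v x)"
    using W2inf_solution_imp_periodic_W2inf[OF sol_v] by blast
  let ?Lb = "(Alo / Bhi) powr (1 / (2 * q))"
  have "0 < Bhi" using assms by (meson less_le_trans)
  have B_bounds: "\<forall>x. 0 \<le> B x \<and> B x \<le> Bhi" using assms by (auto intro: less_imp_le order.trans)
  have "?Lb \<le> u x" for x
    by (rule periodic_W2inf_lichnerowicz_lower_bound[OF u _ eq_u _ _ B_bounds \<open>0 < Bhi\<close>])
      (use assms in auto)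
  moreover have "?Lb \<le> v x" for x
    by (rule periodic_W2inf_lichnerowicz_lower_bound[OF v _ eq_v _ _ B_bounds \<open>0 < Bhi\<close>])
      (use assms in auto)
  moreover have "0 < ?Lb" using assms \<open>0 < Bhi\<close> by simp
  moreover have "\<forall>x. 0 \<le> A1 x" "\<forall>x. 0 \<le> A2 x" using assms by (meson less_le_trans less_imp_le)+
  moreover have "\<forall>x. \<bar>A2 x - A1 x\<bar> \<le> E" using assms by (simp add: abs_minus_commute)
  ultimately have "u x - v x \<le> E / (Blo * (q - 1) * ?Lb powr (2 * q - 1))"
    and "v x - u x \<le> E / (Blo * (q - 1) * ?Lb powr (2 * q - 1))"
    using periodic_W2inf_lichnerowicz_comparison[OF u v eq_u eq_v]
      periodic_W2inf_lichnerowicz_comparison[OF v u eq_v eq_u] assms by blast+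
  then show ?thesis by (simp add: abs_le_iff)
qed

lemma lam_cases: "lam x \<in> {-1, 1}"
  unfolding lam_def Let_def by auto

lemma abs_gammaN_less_1:
  assumes cont: "continuous_on UNIV N" and pos: "\<And>x. 0 < N x"
  shows "\<bar>gammaN N\<bar> < 1"
proof -
  have cont_ab: "continuous_on {a..b} N" for a b using continuous_on_subset[OF cont] by blast
  have integral_pos: "0 < integral {a..b} N" if ab: "a < b" for a b
  proof -
    obtain x0 where "x0 \<in> {a..b}" and min: "\<And>x. x \<in> {a..b} \<Longrightarrow> N x0 \<le> N x"
      using continuous_attains_inf[OF compact_Icc _ cont_ab[of a b]] ab by auto
    have "0 < (b - a) * N x0" using ab pos by simp
    also have "\<dots> = integral {a..b} (\<lambda>_. N x0)" using ab by simp
    also have "\<dots> \<le> integral {a..b} N"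
      using min cont_ab by (intro integral_le integrable_continuous_interval) auto
    finally show ?thesis .
  qed
  have lam_on_period: "lam x = (if x < 0 then -1 else 1)" if "- pi \<le> x" "x < pi" for x
  proof -
    have "\<lfloor>(x + pi) / (2 * pi)\<rfloor> = 0" using that by (simp add: floor_eq_iff field_simps)
    then show ?thesis by (simp add: lam_def)
  qed
  define Jm where "Jm = integral {-pi..0} N"
  define Jp where "Jp = integral {0..pi} N"
  have "0 < Jm" "0 < Jp"
    unfolding Jm_def Jp_def by (simp_all add: integral_pos)
  have "integral {-pi..pi} N = Jm + Jp"
    unfolding Jm_def Jp_def using integrable_continuous_interval[OF cont_ab]
    by (intro Henstock_Kurzweil_Integration.integral_combine[symmetric]) auto
  have "(N has_integral Jm) {-pi..0}" "(N has_integral Jp) {0..pi}"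
    unfolding Jm_def Jp_def using integrable_continuous_interval[OF cont_ab] by auto
  have neg: "((\<lambda>x. lam x * N x) has_integral - Jm) {-pi..0}"
    by (rule has_integral_spike[OF negligible_sing _ has_integral_neg[OF \<open>(N has_integral Jm) _\<close>],
        of 0]) (auto simp: lam_on_period)
  have "((\<lambda>x. lam x * N x) has_integral Jp) {0..pi}"
    by (rule has_integral_spike[OF negligible_sing _ \<open>(N has_integral Jp) _\<close>, of pi])
      (auto simp: lam_on_period)
  with neg have "integral {-pi..pi} (\<lambda>x. lam x * N x) = Jp - Jm"
    using has_integral_combine[of "-pi" 0 pi, OF _ _ neg] by (intro integral_unique) simp
  then have "gammaN N = (Jm - Jp) / (Jm + Jp)"
    unfolding gammaN_def \<open>integral {-pi..pi} N = Jm + Jp\<close> by (simp add: minus_divide_left)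
  moreover have "(Jm - Jp) / (Jm + Jp) < 1" "-1 < (Jm - Jp) / (Jm + Jp)"
    using \<open>0 < Jm\<close> \<open>0 < Jp\<close> by (simp_all add: divide_less_eq less_divide_eq)
  ultimately show ?thesis unfolding abs_less_iff by linarith
qed

lemma sign_shift_square_bounds:
  fixes t l :: real
  assumes "l \<in> {-1, 1}"
  shows "(\<bar>t\<bar> - 1)\<^sup>2 \<le> (t + l)\<^sup>2" "(t + l)\<^sup>2 \<le> (\<bar>t\<bar> + 1)\<^sup>2"
proof -
  have "\<bar>\<bar>t\<bar> - 1\<bar> \<le> \<bar>t + l\<bar>" "\<bar>t + l\<bar> \<le> \<bar>\<bar>t\<bar> + 1\<bar>" using assms by auto
  then show "(\<bar>t\<bar> - 1)\<^sup>2 \<le> (t + l)\<^sup>2" "(t + l)\<^sup>2 \<le> (\<bar>t\<bar> + 1)\<^sup>2"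
    by (simp_all only: abs_le_square_iff)
qed

lemma perturbed_sign_shift_square_bounds:
  fixes \<kappa> \<gamma> l \<mu> \<eta> s :: real
  assumes "l \<in> {-1, 1}" "0 < \<kappa>" "\<bar>\<gamma>\<bar> < 1" "0 \<le> s" "s \<le> 1" "\<bar>\<mu>\<bar> * s \<le> (1 - \<bar>\<gamma>\<bar>) / 2"
  shows "\<kappa> * ((1 - \<bar>\<gamma>\<bar>) / 2)\<^sup>2 \<le> 2 * \<eta>\<^sup>2 * s\<^sup>2 + \<kappa> * (\<mu> * s + \<gamma> + l)\<^sup>2"
    and "\<bar>2 * \<eta>\<^sup>2 * s\<^sup>2 + \<kappa> * (\<mu> * s + \<gamma> + l)\<^sup>2 - \<kappa> * (\<gamma> + l)\<^sup>2\<bar>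
           \<le> (2 * \<eta>\<^sup>2 + \<kappa> * \<mu>\<^sup>2 + 2 * \<kappa> * \<bar>\<mu>\<bar> * (\<bar>\<gamma>\<bar> + 1)) * s"
proof -
  have gl: "1 - \<bar>\<gamma>\<bar> \<le> \<bar>\<gamma> + l\<bar>" "\<bar>\<gamma> + l\<bar> \<le> \<bar>\<gamma>\<bar> + 1" using assms(1) by auto
  have "\<bar>\<gamma> + l\<bar> \<le> \<bar>\<mu> * s + \<gamma> + l\<bar> + \<bar>\<mu> * s\<bar>"
    using abs_triangle_ineq[of "\<mu> * s + \<gamma> + l" "- (\<mu> * s)"] by simp
  moreover have "\<bar>\<mu> * s\<bar> \<le> (1 - \<bar>\<gamma>\<bar>) / 2" using assms by (simp add: abs_mult)
  ultimately have "(1 - \<bar>\<gamma>\<bar>) / 2 \<le> \<bar>\<mu> * s + \<gamma> + l\<bar>" using gl by argo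
  then have "((1 - \<bar>\<gamma>\<bar>) / 2)\<^sup>2 \<le> \<bar>\<mu> * s + \<gamma> + l\<bar>\<^sup>2"
    using assms(3) by (intro power_mono) auto
  then have "\<kappa> * ((1 - \<bar>\<gamma>\<bar>) / 2)\<^sup>2 \<le> \<kappa> * (\<mu> * s + \<gamma> + l)\<^sup>2"
    using assms(2) by simp
  moreover have "0 \<le> 2 * \<eta>\<^sup>2 * s\<^sup>2" by simp
  ultimately show "\<kappa> * ((1 - \<bar>\<gamma>\<bar>) / 2)\<^sup>2 \<le> 2 * \<eta>\<^sup>2 * s\<^sup>2 + \<kappa> * (\<mu> * s + \<gamma> + l)\<^sup>2"
    by linarith
  have "s\<^sup>2 \<le> s" using assms by (simp add: power2_eq_square mult_left_le_one_le)
  have "\<bar>2 * \<eta>\<^sup>2 * s\<^sup>2 + \<kappa> * (\<mu> * s + \<gamma> + l)\<^sup>2 - \<kappa> * (\<gamma> + l)\<^sup>2\<bar>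
      = \<bar>(2 * \<eta>\<^sup>2 + \<kappa> * \<mu>\<^sup>2) * s\<^sup>2 + 2 * \<kappa> * \<mu> * s * (\<gamma> + l)\<bar>"
    by (simp add: power2_eq_square algebra_simps)
  also have "\<dots> \<le> (2 * \<eta>\<^sup>2 + \<kappa> * \<mu>\<^sup>2) * s\<^sup>2 + \<bar>2 * \<kappa> * \<mu> * s * (\<gamma> + l)\<bar>"
    using abs_triangle_ineq[of "(2 * \<eta>\<^sup>2 + \<kappa> * \<mu>\<^sup>2) * s\<^sup>2"] assms(2) by simp
  also have "\<bar>2 * \<kappa> * \<mu> * s * (\<gamma> + l)\<bar> = 2 * \<kappa> * \<bar>\<mu>\<bar> * s * \<bar>\<gamma> + l\<bar>"
    using assms by (simp add: abs_mult)
  also have "(2 * \<eta>\<^sup>2 + \<kappa> * \<mu>\<^sup>2) * s\<^sup>2 + 2 * \<kappa> * \<bar>\<mu>\<bar> * s * \<bar>\<gamma> + l\<bar>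
      \<le> (2 * \<eta>\<^sup>2 + \<kappa> * \<mu>\<^sup>2) * s + 2 * \<kappa> * \<bar>\<mu>\<bar> * s * (\<bar>\<gamma>\<bar> + 1)"
    using assms \<open>s\<^sup>2 \<le> s\<close> gl(2) by (intro add_mono mult_left_mono) auto
  finally show "\<bar>2 * \<eta>\<^sup>2 * s\<^sup>2 + \<kappa> * (\<mu> * s + \<gamma> + l)\<^sup>2 - \<kappa> * (\<gamma> + l)\<^sup>2\<bar>
           \<le> (2 * \<eta>\<^sup>2 + \<kappa> * \<mu>\<^sup>2 + 2 * \<kappa> * \<bar>\<mu>\<bar> * (\<bar>\<gamma>\<bar> + 1)) * s"
    by (simp add: algebra_simps)
qed

lemma powr_bound_strict:
  fixes f :: "real \<Rightarrow> 'a \<Rightarrow> real"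
  assumes "\<forall>\<^sub>F d in at_top. \<forall>x. \<bar>f d x\<bar> \<le> K * d powr (- q)"
  shows "\<exists>c>0. \<forall>\<^sub>F d in at_top. \<forall>x. \<bar>f d x\<bar> < c * d powr (- q)"
proof -
  have "\<forall>\<^sub>F d in at_top. \<forall>x. \<bar>f d x\<bar> < (\<bar>K\<bar> + 1) * d powr (- q)"
    using assms eventually_gt_at_top[of 0]
  proof eventually_elim
    case (elim d)
    have "K * d powr (- q) < (\<bar>K\<bar> + 1) * d powr (- q)"
      using elim(2) by (intro mult_strict_right_mono) auto
    with elim(1) show ?case using le_less_trans by blast
  qed
  moreover have "(0::real) < \<bar>K\<bar> + 1" by simp
  ultimately show ?thesis by blast
qed

lemma powr_close_tendsto_iff:
  fixes f g :: "real \<Rightarrow> real"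
  assumes "\<forall>\<^sub>F d in at_top. \<bar>f d - g d\<bar> \<le> K * d powr (- q)" "0 < q"
  shows "(f \<longlongrightarrow> L) at_top \<longleftrightarrow> (g \<longlongrightarrow> L) at_top"
proof -
  have "((\<lambda>d. K * d powr (- q)) \<longlongrightarrow> 0) at_top"
    using tendsto_neg_powr[OF _ filterlim_ident, of "- q"] \<open>0 < q\<close> by (intro tendsto_mult_right_zero) simp
  with assms(1) have fg: "((\<lambda>d. f d - g d) \<longlongrightarrow> 0) at_top"
    unfolding real_norm_def[symmetric] by (rule Lim_null_comparison)
  have gf: "((\<lambda>d. g d - f d) \<longlongrightarrow> 0) at_top"
    using tendsto_minus[OF fg] by simp
  show ?thesis
    using Lim_transform[of g L at_top f, OF _ fg] Lim_transform[of f L at_top g, OF _ gf] by blast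
qed

lemma eventually_perturbed_square_bounds:
  fixes \<kappa> \<gamma> \<mu> \<eta> q :: real and l :: "real \<Rightarrow> real"
  assumes "0 < \<kappa>" "\<bar>\<gamma>\<bar> < 1" "0 < q" and l: "\<forall>x. l x \<in> {-1, 1}"
  shows "\<forall>\<^sub>F d in at_top. 0 < d \<and> (\<forall>x.
      \<kappa> * ((1 - \<bar>\<gamma>\<bar>) / 2)\<^sup>2 \<le> 2 * \<eta>\<^sup>2 * d powr (- 2 * q) + \<kappa> * (\<mu> * d powr (- q) + \<gamma> + l x)\<^sup>2 \<and>
      \<bar>\<kappa> * (\<gamma> + l x)\<^sup>2 - (2 * \<eta>\<^sup>2 * d powr (- 2 * q) + \<kappa> * (\<mu> * d powr (- q) + \<gamma> + l x)\<^sup>2)\<bar>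
        \<le> (2 * \<eta>\<^sup>2 + \<kappa> * \<mu>\<^sup>2 + 2 * \<kappa> * \<bar>\<mu>\<bar> * (\<bar>\<gamma>\<bar> + 1)) * d powr (- q))"
proof -
  define \<delta> where "\<delta> = (1 - \<bar>\<gamma>\<bar>) / 2"
  have "0 < \<delta>" using assms by (simp add: \<delta>_def)
  then have "((\<lambda>d. d powr (- q)) \<longlongrightarrow> 0) at_top" "0 < min 1 (\<delta> / (\<bar>\<mu>\<bar> + 1))"
    using tendsto_neg_powr[OF _ filterlim_ident, of "- q"] \<open>0 < q\<close> by simp_all
  from order_tendstoD(2)[OF this] eventually_gt_at_top[of 0]
  have "\<forall>\<^sub>F d in at_top. 0 < d \<and> d powr (- q) \<le> min 1 (\<delta> / (\<bar>\<mu>\<bar> + 1))"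
    by eventually_elim simp
  then show ?thesis
  proof eventually_elim
    case (elim d)
    define s where "s = d powr (- q)"
    have "0 \<le> s" "s \<le> 1" "(\<bar>\<mu>\<bar> + 1) * s \<le> \<delta>" using elim by (simp_all add: s_def field_simps)
    then have "\<bar>\<mu>\<bar> * s \<le> \<delta>" using mult_right_mono[of "\<bar>\<mu>\<bar>" "\<bar>\<mu>\<bar> + 1" s] by linarith
    moreover have "d powr (- 2 * q) = s\<^sup>2"
      using elim by (simp add: s_def power2_eq_square flip: powr_add)
    ultimately show ?case
      using perturbed_sign_shift_square_bounds[OF l[rule_format] \<open>0 < \<kappa>\<close> \<open>\<bar>\<gamma>\<bar> < 1\<close> \<open>0 \<le> s\<close> \<open>s \<le> 1\<close>,
          where \<mu> = \<mu> and \<eta> = \<eta>] elim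
      by (simp add: \<delta>_def s_def abs_minus_commute)
  qed
qed

lemma lichnerowicz_perturbation_close:
  fixes \<kappa> q t \<gamma> \<eta> \<mu> :: real and l a :: "real \<Rightarrow> real" and u v :: "real \<Rightarrow> real \<Rightarrow> real"
  assumes "0 < \<kappa>" "2 < q" "\<bar>\<gamma>\<bar> < 1" "\<bar>t\<bar> \<noteq> 1" and l: "\<forall>x. l x \<in> {-1, 1}"
    and a: "\<forall>d>0. 0 < a d"
    and u_pos: "\<forall>d>0. \<forall>x. 0 < u d x" and v_pos: "\<forall>d>0. \<forall>x. 0 < v d x"
    and u: "\<forall>d>0. W2inf_solution
      (\<lambda>x w w''. a d * w'' = lichnerowicz_rhs q (\<kappa> * (t + l x)\<^sup>2) (\<kappa> * (\<gamma> + l x)\<^sup>2) w) (u d)"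
    and v: "\<forall>d>0. W2inf_solution
      (\<lambda>x w w''. a d * w'' = lichnerowicz_rhs q (\<kappa> * (t + l x)\<^sup>2)
        (2 * \<eta>\<^sup>2 * d powr (- 2 * q) + \<kappa> * (\<mu> * d powr (- q) + \<gamma> + l x)\<^sup>2) w) (v d)"
  shows "\<exists>K. \<forall>\<^sub>F d in at_top. \<forall>x. \<bar>u d x - v d x\<bar> \<le> K * d powr (- q)"
proof -
  define C where "C = 2 * \<eta>\<^sup>2 + \<kappa> * \<mu>\<^sup>2 + 2 * \<kappa> * \<bar>\<mu>\<bar> * (\<bar>\<gamma>\<bar> + 1)"
  define Blo Bhi Alo where "Blo = \<kappa> * (\<bar>t\<bar> - 1)\<^sup>2" and "Bhi = \<kappa> * (\<bar>t\<bar> + 1)\<^sup>2"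
    and "Alo = \<kappa> * ((1 - \<bar>\<gamma>\<bar>) / 2)\<^sup>2"
  have pos: "0 < Blo" "0 < Alo" "2 \<le> q" "0 < q"
    using assms by (simp_all add: Blo_def Alo_def)
  have B_bounds: "\<forall>x. Blo \<le> \<kappa> * (t + l x)\<^sup>2 \<and> \<kappa> * (t + l x)\<^sup>2 \<le> Bhi"
    using sign_shift_square_bounds[OF l[rule_format]] \<open>0 < \<kappa>\<close> by (simp add: Blo_def Bhi_def)
  have A_bound: "\<forall>x. Alo \<le> \<kappa> * (\<gamma> + l x)\<^sup>2"
    using perturbed_sign_shift_square_bounds(1)[OF l[rule_format] \<open>0 < \<kappa>\<close> \<open>\<bar>\<gamma>\<bar> < 1\<close>, where s = 0]
      \<open>\<bar>\<gamma>\<bar> < 1\<close> by (simp add: Alo_def)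
  have "\<forall>\<^sub>F d in at_top. \<forall>x. \<bar>u d x - v d x\<bar>
      \<le> C / (Blo * (q - 1) * ((Alo / Bhi) powr (1 / (2 * q))) powr (2 * q - 1)) * d powr (- q)"
    using eventually_perturbed_square_bounds[OF \<open>0 < \<kappa>\<close> \<open>\<bar>\<gamma>\<bar> < 1\<close> \<open>0 < q\<close> l,
        where \<mu> = \<mu> and \<eta> = \<eta>, folded Alo_def C_def]
  proof eventually_elim
    case (elim d)
    then have "0 < d" by simp
    have "\<bar>u d x - v d x\<bar> \<le> C * d powr (- q) / (Blo * (q - 1) * ((Alo / Bhi) powr (1 / (2 * q))) powr (2 * q - 1))"
      for x
    proof (rule W2inf_lichnerowicz_solutions_close[OF u[rule_format, OF \<open>0 < d\<close>] v[rule_format, OF \<open>0 < d\<close>]])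
      show "\<forall>x. 0 < u d x" "\<forall>x. 0 < v d x" "0 < a d"
        using u_pos v_pos a \<open>0 < d\<close> by blast+
    qed (use B_bounds A_bound elim pos in auto)
    then show ?case by simp
  qed
  then show ?thesis by blast
qed

theorem proposition3p26:
  fixes n :: nat and q \<kappa> t \<eta> \<mu> :: real
    and N :: "real \<Rightarrow> real"
    and \<psi> \<psi>h :: "real \<Rightarrow> real \<Rightarrow> real"
  assumes n3: "n \<ge> 3"
    and q_def: "q = 2 * real n / (real n - 2)"
    and kappa_def: "\<kappa> = (real n - 1) / real n"
    and N_per: "periodic2pi N" and N_smooth: "smooth_fun N" and N_pos: "\<forall>x. N x > 0"
    and t_ne: "\<bar>t\<bar> \<noteq> 1"
    and psi_pos: "\<forall>d>0. \<forall>x. \<psi> d x > 0"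
    and psi_sol: "\<forall>d>0. W2inf_solution
        (\<lambda>x u u''. - 2 * \<kappa> * q * d powr (- 2 * q / real n) * u''
           - 2 * \<eta>\<^sup>2 * d powr (- 2 * q) * u powr (- q - 1)
           - \<kappa> * (\<mu> * d powr (- q) + gammaN N + lam x)\<^sup>2 * u powr (- q - 1)
           + \<kappa> * (t + lam x)\<^sup>2 * u powr (q - 1) = 0) (\<psi> d)"
    and psih_pos: "\<forall>d>0. \<forall>x. \<psi>h d x > 0"
    and psih_sol: "\<forall>d>0. W2inf_solution
        (\<lambda>x u u''. - 2 * \<kappa> * q * d powr (- 2 * q / real n) * u''
           - \<kappa> * (gammaN N + lam x)\<^sup>2 * u powr (- q - 1)
           + \<kappa> * (t + lam x)\<^sup>2 * u powr (q - 1) = 0) (\<psi>h d)"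
  shows "(\<exists>c>0. \<forall>\<^sub>F d in at_top. \<forall>x. \<bar>\<psi>h d x - \<psi> d x\<bar> < c * d powr (- q))
       \<and> (\<forall>L. ((\<lambda>d. \<psi> d 0) \<longlongrightarrow> L) at_top \<longleftrightarrow> ((\<lambda>d. \<psi>h d 0) \<longlongrightarrow> L) at_top)"
proof -
  have "2 < q" "0 < \<kappa>" using n3 by (simp_all add: q_def kappa_def field_simps)
  have "continuous_on UNIV N"
    using N_smooth unfolding smooth_fun_def
    by (intro continuous_at_imp_continuous_on ballI differentiable_imp_continuous_within) (metis funpow_0)
  then have "\<bar>gammaN N\<bar> < 1" using N_pos by (intro abs_gammaN_less_1) auto
  define a where "a d = 2 * \<kappa> * q * d powr (- 2 * q / real n)" for d
  have a_pos: "\<forall>d>0. 0 < a d" using \<open>2 < q\<close> \<open>0 < \<kappa>\<close> by (simp add: a_def)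
  have "\<forall>d>0. W2inf_solution (\<lambda>x w w''. a d * w''
      = lichnerowicz_rhs q (\<kappa> * (t + lam x)\<^sup>2) (\<kappa> * (gammaN N + lam x)\<^sup>2) w) (\<psi>h d)"
    using psih_sol by (auto elim!: W2inf_solution_mono simp: a_def lichnerowicz_rhs_def algebra_simps)
  moreover have "\<forall>d>0. W2inf_solution (\<lambda>x w w''. a d * w'' = lichnerowicz_rhs q (\<kappa> * (t + lam x)\<^sup>2)
      (2 * \<eta>\<^sup>2 * d powr (- 2 * q) + \<kappa> * (\<mu> * d powr (- q) + gammaN N + lam x)\<^sup>2) w) (\<psi> d)"
    using psi_sol by (auto elim!: W2inf_solution_mono simp: a_def lichnerowicz_rhs_def algebra_simps)
  moreover have "\<forall>x. lam x \<in> {-1, 1}" using lam_cases by blast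
  ultimately obtain K where close: "\<forall>\<^sub>F d in at_top. \<forall>x. \<bar>\<psi>h d x - \<psi> d x\<bar> \<le> K * d powr (- q)"
    using lichnerowicz_perturbation_close[OF \<open>0 < \<kappa>\<close> \<open>2 < q\<close> \<open>\<bar>gammaN N\<bar> < 1\<close> t_ne
        _ a_pos psih_pos psi_pos] by blast
  from close have "\<forall>\<^sub>F d in at_top. \<bar>\<psi> d 0 - \<psi>h d 0\<bar> \<le> K * d powr (- q)"
    by eventually_elim (simp add: abs_minus_commute)
  then have "((\<lambda>d. \<psi> d 0) \<longlongrightarrow> L) at_top \<longleftrightarrow> ((\<lambda>d. \<psi>h d 0) \<longlongrightarrow> L) at_top" for L
    using \<open>2 < q\<close> by (intro powr_close_tendsto_iff) auto
  then show ?thesis using powr_bound_strict[OF close] by (intro conjI allI)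
qed

end
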